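(* Fix an integer $t\ge 1$ and let $(\rho,y)$ be the principal eigenpair of the $t$-pleated bowtie $B_t$. Then the set of vertices of spectral rank 1 in $B_t$ (i.e. the vertices $v$ at which $y_v$ attains its maximum) is exactly $\{r_1,r_2\}$ if and only if \[ t<\rho\sqrt{\rho-1}-1 . \]
   Context: For a connected $k$-uniform hypergraph $H=([n],E)$ and $x\in\mathbb{R}^n$, write $x^e=\prod_{v\in e}x_v$ and $F_H(x)=k\sum_{e\in E}x^e$. The principal eigenpair $(\rho,y)$ of $H$ is the unique pair with $y$ strictly positive, $\|y\|_k=1$, satisfying $\rho\, y_i^{k-1}=\sum_{e\in E,\, i\in e} y^{e\setminus\{i\}}$ for all $i$; equivalently $\rho=\max_{\|z\|_k^k=1}F_H(z)$ with $y$ the unique positive maximizer. The $t$-pleated bowtie $B_t$ is the $3$-uniform hypergraph on the $2t+5$ vertices $c,\ell_1,\dots,\ell_{t+2},r_1,\dots,r_{t+2}$ with edge set \[ \{\{c,r_1,r_2\}\}\cup\{\{c,\ell_1,\ell_j\}: 2\le j\le t+2\}\cup\{\{r_1,r_2,r_j\}: 3\le j\le t+2\}, \] so $\{c,\ell_1\}$ lies in $t+1$ edges and $\{r_1,r_2\}$ lies in $t+1$ edges. The spectral rank of a vertex is its position when vertices are ordered by decreasing value of the principal eigenvector (tied vertices share a rank); spectral rank 1 vertices are those with the largest entry. *)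

theory Defs
  imports Complex_Main
begin

text \<open>General k-uniform hypergraphs: vertex set V, edge set E (a set of k-element subsets of V).
  A vector is a function from vertices to reals (only values on V matter).\<close>

definition principal_eigenpair ::
  "nat \<Rightarrow> 'v set \<Rightarrow> 'v set set \<Rightarrow> real \<Rightarrow> ('v \<Rightarrow> real) \<Rightarrow> bool" where
  "principal_eigenpair k V E \<rho> y \<longleftrightarrow>
     (\<forall>v\<in>V. y v > 0) \<and>
     (\<Sum>v\<in>V. y v ^ k) = 1 \<and>
     (\<forall>i\<in>V. \<rho> * y i ^ (k - 1) = (\<Sum>e\<in>{e\<in>E. i \<in> e}. \<Prod>u\<in>e - {i}. y u))"

definition spectral_rank_one :: "'v set \<Rightarrow> ('v \<Rightarrow> real) \<Rightarrow> 'v set" where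
  "spectral_rank_one V y = {v\<in>V. \<forall>u\<in>V. y u \<le> y v}"

datatype bvert = C | L nat | R nat

definition bowtie_V :: "nat \<Rightarrow> bvert set" where
  "bowtie_V t = {C} \<union> L ` {1..t+2} \<union> R ` {1..t+2}"

definition bowtie_E :: "nat \<Rightarrow> bvert set set" where
  "bowtie_E t = {{C, R 1, R 2}}
     \<union> {{C, L 1, L j} | j. 2 \<le> j \<and> j \<le> t + 2}
     \<union> {{R 1, R 2, R j} | j. 3 \<le> j \<and> j \<le> t + 2}"

end

theory Submission imports Defs begin

text \<open>All leaves \<open>l\<^sub>j\<close> (\<open>j \<ge> 2\<close>) share one eigenvector entry \<open>l\<close>, all leaves \<open>r\<^sub>j\<close> (\<open>j \<ge> 3\<close>) share
  one entry \<open>s\<close>, and \<open>y(r\<^sub>1) = y(r\<^sub>2) = r\<close>. With \<open>c = y(c)\<close>, \<open>a = y(l\<^sub>1)\<close> and \<open>T = t + 1\<close> the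
  eigen-equations collapse to \<open>\<rho> c\<^sup>2 = r\<^sup>2 + T a l\<close>, \<open>\<rho> a\<^sup>2 = T c l\<close>, \<open>\<rho> l\<^sup>2 = c a\<close> and
  \<open>\<rho> s\<^sup>2 = r\<^sup>2\<close>. Eliminating \<open>a\<close> and \<open>l\<close> gives \<open>\<rho>\<^sup>3 a\<^sup>3 = T\<^sup>2 c\<^sup>3\<close> and
  \<open>\<rho>\<^sup>2 r\<^sup>2 = c\<^sup>2 (\<rho>\<^sup>3 - T\<^sup>2)\<close>, so \<open>c < r\<close> exactly when \<open>T\<^sup>2 < \<rho>\<^sup>2 (\<rho> - 1)\<close>, which is the
  threshold of the theorem. In that case \<open>\<rho> > 1\<close>, which forces \<open>a, l < c\<close> and \<open>s < r\<close>.\<close>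

lemma sqrt_gt_iff_sq_lt:
  fixes x y :: real
  assumes "0 \<le> x"
  shows "x < sqrt y \<longleftrightarrow> x\<^sup>2 < y"
  by (metis assms real_sqrt_less_iff real_sqrt_unique)

lemma less_mult_sqrt_iff:
  fixes x \<rho> :: real
  assumes "0 \<le> x" and "0 < \<rho>"
  shows "x < \<rho> * sqrt (\<rho> - 1) \<longleftrightarrow> x\<^sup>2 < \<rho>\<^sup>2 * (\<rho> - 1)"
proof -
  have "\<rho> * sqrt (\<rho> - 1) = sqrt (\<rho>\<^sup>2 * (\<rho> - 1))"
    using assms(2) by (simp add: real_sqrt_mult)
  then show ?thesis
    using sqrt_gt_iff_sq_lt[OF assms(1)] by simp
qed

lemma less_iff_power2_less:
  fixes a b :: "'a::linordered_idom"
  assumes "0 \<le> a" and "0 \<le> b"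
  shows "a < b \<longleftrightarrow> a\<^sup>2 < b\<^sup>2"
  using assms by (metis power2_less_imp_less power_strict_mono zero_less_numeral)

lemma spectral_rank_one_eqI:
  assumes "S \<subseteq> V" and "S \<noteq> {}" and "\<And>u v. u \<in> S \<Longrightarrow> v \<in> S \<Longrightarrow> y u = y v"
    and "\<And>u v. u \<in> S \<Longrightarrow> v \<in> V - S \<Longrightarrow> y v < y u"
  shows "spectral_rank_one V y = S"
proof -
  obtain w where w: "w \<in> S" using assms(2) by blast
  have "v \<in> spectral_rank_one V y \<longleftrightarrow> v \<in> S" for v
  proof
    assume "v \<in> spectral_rank_one V y"
    then have "v \<in> V" and "y w \<le> y v"
      using w assms(1) unfolding spectral_rank_one_def by auto
    then show "v \<in> S" using assms(4)[OF w, of v] by force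
  next
    assume v: "v \<in> S"
    have "y u \<le> y v" if "u \<in> V" for u
      using that v assms(3)[OF v, of u] assms(4)[OF v, of u] by (cases "u \<in> S") auto
    then show "v \<in> spectral_rank_one V y"
      using v assms(1) unfolding spectral_rank_one_def by auto
  qed
  then show ?thesis by blast
qed

lemma spectral_rank_one_less:
  assumes "u \<in> spectral_rank_one V y" and "v \<in> V - spectral_rank_one V y"
  shows "y v < y u"
  using assms unfolding spectral_rank_one_def by force

lemma link_sum_reindex:
  assumes "inj_on f J"
    and "\<And>j. j \<in> J \<Longrightarrow> f j - {i} = {u j, w j}" and "\<And>j. j \<in> J \<Longrightarrow> u j \<noteq> w j"
  shows "(\<Sum>e\<in>f ` J. \<Prod>v\<in>e - {i}. y v) = (\<Sum>j\<in>J. y (u j) * y (w j))"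
  using assms by (simp add: sum.reindex)

lemma bowtie_V_simps [simp]:
  "C \<in> bowtie_V t"
  "L j \<in> bowtie_V t \<longleftrightarrow> 1 \<le> j \<and> j \<le> t + 2"
  "R j \<in> bowtie_V t \<longleftrightarrow> 1 \<le> j \<and> j \<le> t + 2"
  by (auto simp: bowtie_V_def)

lemma bowtie_E_eq:
  "bowtie_E t = {{C, R 1, R 2}} \<union> (\<lambda>j. {C, L 1, L j}) ` {2..t+2} \<union> (\<lambda>j. {R 1, R 2, R j}) ` {3..t+2}"
  unfolding bowtie_E_def by auto

lemma inj_on_left_fan: "inj_on (\<lambda>j. {C, L 1, L j}) {2..t+2}"
  by (auto simp: inj_on_def insert_eq_iff doubleton_eq_iff)

lemma inj_on_right_fan: "inj_on (\<lambda>j. {R 1, R 2, R j}) {3..t+2}"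
  by (auto simp: inj_on_def insert_eq_iff doubleton_eq_iff)

lemma bowtie_link_C:
  "(\<Sum>e\<in>{e\<in>bowtie_E t. C \<in> e}. \<Prod>u\<in>e - {C}. y u)
     = y (R 1) * y (R 2) + (\<Sum>j=2..t+2. y (L 1) * y (L j))"
proof -
  have "{e\<in>bowtie_E t. C \<in> e} = insert {C, R 1, R 2} ((\<lambda>j. {C, L 1, L j}) ` {2..t+2})"
    unfolding bowtie_E_eq by auto
  moreover have "{C, R 1, R 2} \<notin> (\<lambda>j. {C, L 1, L j}) ` {2..t+2}" by auto
  moreover have "{C, R 1, R 2} - {C} = {R 1, R 2}" by auto
  moreover have "(\<Sum>e\<in>(\<lambda>j. {C, L 1, L j}) ` {2..t+2}. \<Prod>u\<in>e - {C}. y u)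
      = (\<Sum>j=2..t+2. y (L 1) * y (L j))"
    by (rule link_sum_reindex[OF inj_on_left_fan]) auto
  ultimately show ?thesis by simp
qed

lemma bowtie_link_L1:
  "(\<Sum>e\<in>{e\<in>bowtie_E t. L 1 \<in> e}. \<Prod>u\<in>e - {L 1}. y u) = (\<Sum>j=2..t+2. y C * y (L j))"
proof -
  have "{e\<in>bowtie_E t. L 1 \<in> e} = (\<lambda>j. {C, L 1, L j}) ` {2..t+2}"
    unfolding bowtie_E_eq by auto
  then show ?thesis
    by (simp only:) (rule link_sum_reindex[OF inj_on_left_fan]; auto)
qed

lemma bowtie_link_L:
  assumes "2 \<le> j" and "j \<le> t + 2"
  shows "(\<Sum>e\<in>{e\<in>bowtie_E t. L j \<in> e}. \<Prod>u\<in>e - {L j}. y u) = y C * y (L 1)"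
proof -
  have "{e\<in>bowtie_E t. L j \<in> e} = {{C, L 1, L j}}"
    using assms unfolding bowtie_E_eq by auto
  moreover have "{C, L 1, L j} - {L j} = {C, L 1}" using assms by auto
  ultimately show ?thesis by simp
qed

lemma bowtie_link_R1:
  "(\<Sum>e\<in>{e\<in>bowtie_E t. R 1 \<in> e}. \<Prod>u\<in>e - {R 1}. y u)
     = y C * y (R 2) + (\<Sum>j=3..t+2. y (R 2) * y (R j))"
proof -
  have "{e\<in>bowtie_E t. R 1 \<in> e} = insert {C, R 1, R 2} ((\<lambda>j. {R 1, R 2, R j}) ` {3..t+2})"
    unfolding bowtie_E_eq by auto
  moreover have "{C, R 1, R 2} \<notin> (\<lambda>j. {R 1, R 2, R j}) ` {3..t+2}" by auto
  moreover have "{C, R 1, R 2} - {R 1} = {C, R 2}" by auto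
  moreover have "(\<Sum>e\<in>(\<lambda>j. {R 1, R 2, R j}) ` {3..t+2}. \<Prod>u\<in>e - {R 1}. y u)
      = (\<Sum>j=3..t+2. y (R 2) * y (R j))"
    by (rule link_sum_reindex[OF inj_on_right_fan]) auto
  ultimately show ?thesis by simp
qed

lemma bowtie_link_R2:
  "(\<Sum>e\<in>{e\<in>bowtie_E t. R 2 \<in> e}. \<Prod>u\<in>e - {R 2}. y u)
     = y C * y (R 1) + (\<Sum>j=3..t+2. y (R 1) * y (R j))"
proof -
  have "{e\<in>bowtie_E t. R 2 \<in> e} = insert {C, R 1, R 2} ((\<lambda>j. {R 1, R 2, R j}) ` {3..t+2})"
    unfolding bowtie_E_eq by auto
  moreover have "{C, R 1, R 2} \<notin> (\<lambda>j. {R 1, R 2, R j}) ` {3..t+2}" by auto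
  moreover have "{C, R 1, R 2} - {R 2} = {C, R 1}" by auto
  moreover have "(\<Sum>e\<in>(\<lambda>j. {R 1, R 2, R j}) ` {3..t+2}. \<Prod>u\<in>e - {R 2}. y u)
      = (\<Sum>j=3..t+2. y (R 1) * y (R j))"
    by (rule link_sum_reindex[OF inj_on_right_fan]) auto
  ultimately show ?thesis by simp
qed

lemma bowtie_link_R:
  assumes "3 \<le> j" and "j \<le> t + 2"
  shows "(\<Sum>e\<in>{e\<in>bowtie_E t. R j \<in> e}. \<Prod>u\<in>e - {R j}. y u) = y (R 1) * y (R 2)"
proof -
  have "{e\<in>bowtie_E t. R j \<in> e} = {{R 1, R 2, R j}}"
    using assms unfolding bowtie_E_eq by auto
  moreover have "{R 1, R 2, R j} - {R j} = {R 1, R 2}" using assms by auto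
  ultimately show ?thesis by simp
qed

locale bowtie_eigenpair =
  fixes t :: nat and \<rho> :: real and y :: "bvert \<Rightarrow> real"
  assumes t_ge_1: "t \<ge> 1"
    and eigenpair: "principal_eigenpair 3 (bowtie_V t) (bowtie_E t) \<rho> y"
begin

lemma entry_pos [simp]: "v \<in> bowtie_V t \<Longrightarrow> 0 < y v"
  using eigenpair unfolding principal_eigenpair_def by auto

lemma entry_nonneg [simp]: "v \<in> bowtie_V t \<Longrightarrow> 0 \<le> y v"
  using entry_pos less_imp_le by blast

lemma entry_nonzero [simp]: "v \<in> bowtie_V t \<Longrightarrow> y v \<noteq> 0"
  by (metis entry_pos less_irrefl)

lemma eigen_equation:
  "i \<in> bowtie_V t \<Longrightarrow> \<rho> * y i ^ 2 = (\<Sum>e\<in>{e\<in>bowtie_E t. i \<in> e}. \<Prod>u\<in>e - {i}. y u)"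
  using eigenpair unfolding principal_eigenpair_def by auto

lemma eigen_equation_L:
  assumes "2 \<le> j" and "j \<le> t + 2"
  shows "\<rho> * y (L j) ^ 2 = y C * y (L 1)"
  using eigen_equation[of "L j"] bowtie_link_L[OF assms] assms by simp

lemma eigen_equation_R:
  assumes "3 \<le> j" and "j \<le> t + 2"
  shows "\<rho> * y (R j) ^ 2 = y (R 1) * y (R 2)"
  using eigen_equation[of "R j"] bowtie_link_R[OF assms] assms by simp

lemma rho_pos: "0 < \<rho>"
proof -
  have "0 < y C * y (L 1)" by simp
  then have "0 < \<rho> * y (L 2) ^ 2" using eigen_equation_L[of 2] by simp
  then show ?thesis by (simp add: zero_less_mult_iff)
qed

lemma entry_eqI:
  assumes "u \<in> bowtie_V t" and "v \<in> bowtie_V t" and "\<rho> * y u ^ 2 = \<rho> * y v ^ 2"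
  shows "y u = y v"
  using assms rho_pos by (simp add: power2_eq_iff_nonneg)

lemma L_eq_L2: "2 \<le> j \<Longrightarrow> j \<le> t + 2 \<Longrightarrow> y (L j) = y (L 2)"
  by (rule entry_eqI) (simp_all add: eigen_equation_L)

lemma R_eq_R3: "3 \<le> j \<Longrightarrow> j \<le> t + 2 \<Longrightarrow> y (R j) = y (R 3)"
  using t_ge_1 by (intro entry_eqI) (simp_all add: eigen_equation_R)

lemma sum_left_fan: "(\<Sum>j=2..t+2. x * y (L j)) = (real t + 1) * x * y (L 2)"
proof -
  have "(\<Sum>j=2..t+2. x * y (L j)) = (\<Sum>j=2..t+2. x * y (L 2))"
  proof (rule sum.cong)
    show "x * y (L j) = x * y (L 2)" if "j \<in> {2..t+2}" for j
      using that L_eq_L2[of j] by simp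
  qed simp
  then show ?thesis by simp
qed

lemma sum_right_fan: "(\<Sum>j=3..t+2. x * y (R j)) = real t * x * y (R 3)"
proof -
  have "(\<Sum>j=3..t+2. x * y (R j)) = (\<Sum>j=3..t+2. x * y (R 3))"
  proof (rule sum.cong)
    show "x * y (R j) = x * y (R 3)" if "j \<in> {3..t+2}" for j
      using that R_eq_R3[of j] by simp
  qed simp
  then show ?thesis by simp
qed

lemma R2_eq_R1: "y (R 2) = y (R 1)"
proof -
  define k where "k = y C + real t * y (R 3)"
  have eq1: "\<rho> * y (R 1) ^ 2 = y (R 2) * k"
    using eigen_equation[of "R 1"] unfolding bowtie_link_R1 sum_right_fan k_def
    by (simp add: algebra_simps)
  have eq2: "\<rho> * y (R 2) ^ 2 = y (R 1) * k"
    using eigen_equation[of "R 2"] unfolding bowtie_link_R2 sum_right_fan k_def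
    by (simp add: algebra_simps)
  have "\<rho> * y (R 2) ^ 3 = y (R 2) * (\<rho> * y (R 2) ^ 2)"
    by (simp add: power2_eq_square power3_eq_cube)
  also have "\<dots> = y (R 1) * (\<rho> * y (R 1) ^ 2)"
    unfolding eq1 eq2 by simp
  also have "\<dots> = \<rho> * y (R 1) ^ 3"
    by (simp add: power2_eq_square power3_eq_cube)
  finally have "\<rho> * y (R 2) ^ 3 = \<rho> * y (R 1) ^ 3" .
  then have "y (R 2) ^ 3 = y (R 1) ^ 3" using rho_pos by simp
  then show ?thesis by (simp add: power_eq_iff_eq_base)
qed

lemma eigen_equation_C: "\<rho> * y C ^ 2 = y (R 1) ^ 2 + (real t + 1) * y (L 1) * y (L 2)"
  using eigen_equation[of C] unfolding bowtie_link_C sum_left_fan R2_eq_R1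
  by (simp add: power2_eq_square)

lemma eigen_equation_L1: "\<rho> * y (L 1) ^ 2 = (real t + 1) * y C * y (L 2)"
  using eigen_equation[of "L 1"] unfolding bowtie_link_L1 sum_left_fan by simp

lemma eigen_equation_R3: "\<rho> * y (R 3) ^ 2 = y (R 1) ^ 2"
  using eigen_equation_R[of 3] t_ge_1 unfolding R2_eq_R1 by (simp add: power2_eq_square)

text \<open>Square the \<open>l\<^sub>1\<close>-equation and substitute the leaf equation \<open>\<rho> l\<^sup>2 = c a\<close>.\<close>
lemma L1_cube: "\<rho> ^ 3 * y (L 1) ^ 3 = (real t + 1) ^ 2 * y C ^ 3"
proof -
  let ?T = "real t + 1" and ?c = "y C" and ?a = "y (L 1)" and ?l = "y (L 2)"
  have "?a * (\<rho> ^ 3 * ?a ^ 3) = \<rho> * (\<rho> * ?a ^ 2) ^ 2"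
    by (simp add: power2_eq_square power3_eq_cube)
  also have "\<dots> = ?T ^ 2 * ?c ^ 2 * (\<rho> * ?l ^ 2)"
    unfolding eigen_equation_L1 by (simp add: power2_eq_square)
  also have "\<dots> = ?a * (?T ^ 2 * ?c ^ 3)"
    using eigen_equation_L[of 2] by (simp add: power2_eq_square power3_eq_cube)
  finally show ?thesis by simp
qed

lemma R1_sq: "\<rho> ^ 2 * y (R 1) ^ 2 = y C ^ 2 * (\<rho> ^ 3 - (real t + 1) ^ 2)"
proof -
  let ?T = "real t + 1" and ?c = "y C" and ?a = "y (L 1)" and ?l = "y (L 2)" and ?r = "y (R 1)"
  have "?c * (\<rho> * ?c ^ 2) = ?c * ?r ^ 2 + ?a * (?T * ?c * ?l)"
    unfolding eigen_equation_C by (simp add: algebra_simps)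
  also have "\<dots> = ?c * ?r ^ 2 + \<rho> * ?a ^ 3"
    unfolding eigen_equation_L1[symmetric] by (simp add: power2_eq_square power3_eq_cube)
  finally have "\<rho> ^ 2 * (?c * (\<rho> * ?c ^ 2)) = ?c * (\<rho> ^ 2 * ?r ^ 2) + \<rho> ^ 3 * ?a ^ 3"
    by (simp add: algebra_simps power2_eq_square power3_eq_cube)
  then have "?c * (\<rho> ^ 3 * ?c ^ 2) = ?c * (\<rho> ^ 2 * ?r ^ 2 + ?T ^ 2 * ?c ^ 2)"
    unfolding L1_cube by (simp add: algebra_simps power2_eq_square power3_eq_cube)
  then have "\<rho> ^ 3 * ?c ^ 2 = \<rho> ^ 2 * ?r ^ 2 + ?T ^ 2 * ?c ^ 2"
    by simp
  then show ?thesis by (simp add: algebra_simps)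
qed

lemma hub_less_R1_iff: "y C < y (R 1) \<longleftrightarrow> (real t + 1) ^ 2 < \<rho> ^ 2 * (\<rho> - 1)"
proof -
  let ?T = "real t + 1" and ?c = "y C" and ?r = "y (R 1)"
  have "?c < ?r \<longleftrightarrow> ?c ^ 2 < ?r ^ 2"
    by (rule less_iff_power2_less) simp_all
  also have "\<dots> \<longleftrightarrow> \<rho> ^ 2 * ?c ^ 2 < \<rho> ^ 2 * ?r ^ 2"
    using rho_pos by simp
  also have "\<dots> \<longleftrightarrow> ?c ^ 2 * \<rho> ^ 2 < ?c ^ 2 * (\<rho> ^ 3 - ?T ^ 2)"
    unfolding R1_sq by (simp add: mult.commute)
  also have "\<dots> \<longleftrightarrow> \<rho> ^ 2 < \<rho> ^ 3 - ?T ^ 2"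
    by simp
  also have "\<dots> \<longleftrightarrow> ?T ^ 2 < \<rho> ^ 2 * (\<rho> - 1)"
    by (simp add: algebra_simps power2_eq_square power3_eq_cube)
  finally show ?thesis .
qed

context
  assumes hub_less_R1: "y C < y (R 1)"
begin

lemma rho_gt_1: "1 < \<rho>"
proof -
  have "0 < \<rho> ^ 2 * (\<rho> - 1)"
    using hub_less_R1 hub_less_R1_iff zero_le_power2[of "real t + 1"] by linarith
  then show ?thesis by (simp add: zero_less_mult_iff)
qed

lemma L1_less_hub: "y (L 1) < y C"
proof -
  have "(real t + 1) ^ 2 < \<rho> ^ 2 * (\<rho> - 1)"
    using hub_less_R1 hub_less_R1_iff by simp
  also have "\<dots> < \<rho> ^ 3"
    using rho_pos by (simp add: algebra_simps power2_eq_square power3_eq_cube)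
  finally have "(real t + 1) ^ 2 < \<rho> ^ 3" .
  then have "\<rho> ^ 3 * y (L 1) ^ 3 < \<rho> ^ 3 * y C ^ 3"
    unfolding L1_cube by simp
  then have "y (L 1) ^ 3 < y C ^ 3" using rho_pos by simp
  then show ?thesis by (rule power_less_imp_less_base) simp
qed

lemma L2_less_hub: "y (L 2) < y C"
proof -
  have "y (L 2) ^ 2 < \<rho> * y (L 2) ^ 2"
    using rho_gt_1 by simp
  also have "\<dots> < y C ^ 2"
    unfolding eigen_equation_L[of 2, simplified] using L1_less_hub by (simp add: power2_eq_square)
  finally show ?thesis by (rule power2_less_imp_less) simp
qed

lemma R3_less_R1: "y (R 3) < y (R 1)"
proof -
  have "y (R 3) ^ 2 < \<rho> * y (R 3) ^ 2"
    using rho_gt_1 t_ge_1 by simp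
  also have "\<dots> = y (R 1) ^ 2" by (rule eigen_equation_R3)
  finally show ?thesis by (rule power2_less_imp_less) simp
qed

end

lemma spectral_rank_one_iff: "spectral_rank_one (bowtie_V t) y = {R 1, R 2} \<longleftrightarrow> y C < y (R 1)"
proof
  assume "spectral_rank_one (bowtie_V t) y = {R 1, R 2}"
  then show "y C < y (R 1)"
    using spectral_rank_one_less[of "R 1" "bowtie_V t" y C] by simp
next
  assume hub_less: "y C < y (R 1)"
  have "y v < y (R 1)" if "v \<in> bowtie_V t - {R 1, R 2}" for v
  proof (cases v)
    case C
    then show ?thesis using hub_less by simp
  next
    case (L j)
    then show ?thesis
      using that L1_less_hub[OF hub_less] L2_less_hub[OF hub_less] L_eq_L2[of j] hub_less
      by (cases "j = 1") auto
  next
    case (R j)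
    then have "3 \<le> j" "j \<le> t + 2" using that by auto
    then show ?thesis using R R3_less_R1[OF hub_less] R_eq_R3[of j] by simp
  qed
  then show "spectral_rank_one (bowtie_V t) y = {R 1, R 2}"
    using t_ge_1 by (intro spectral_rank_one_eqI) (auto simp: R2_eq_R1)
qed

end

theorem lemma4p1:
  fixes t :: nat and \<rho> :: real and y :: "bvert \<Rightarrow> real"
  assumes "t \<ge> 1"
    and "principal_eigenpair 3 (bowtie_V t) (bowtie_E t) \<rho> y"
  shows "spectral_rank_one (bowtie_V t) y = {R 1, R 2} \<longleftrightarrow>
         real t < \<rho> * sqrt (\<rho> - 1) - 1"
proof -
  interpret bowtie_eigenpair t \<rho> y
    using assms by unfold_locales
  have "real t < \<rho> * sqrt (\<rho> - 1) - 1 \<longleftrightarrow> real t + 1 < \<rho> * sqrt (\<rho> - 1)"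
    by linarith
  also have "\<dots> \<longleftrightarrow> (real t + 1) ^ 2 < \<rho> ^ 2 * (\<rho> - 1)"
    using less_mult_sqrt_iff rho_pos by simp
  finally show ?thesis
    using spectral_rank_one_iff hub_less_R1_iff by simp
qed

end
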